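(* Fix an integer $k \ge 2$, a graphlet $\mathsf{G} = (\mathsf{V},\mathsf{E})$ with $\mathsf{V} = \{u_1,\dots,u_k\}$, and a privacy budget $\epsilon > 0$. Let $\tilde{\mathsf{G}}(G)$ be the output of Algorithm 1 (described in the context) on an input graph $G$ with $n$ nodes. Then the expected $\ell_2$-error of $\tilde{\mathsf{G}}(G)$ as an estimator of $\mathsf{G}(G)$ is $O(n^{k-1})$; that is, there is a constant $C$ (depending only on $k$, $\mathsf{G}$ and $\epsilon$) such that for every $n$ and every simple undirected graph $G$ on $n$ nodes, $$\sqrt{\mathbb{E}\big[(\tilde{\mathsf{G}}(G) - \mathsf{G}(G))^2\big]} \le C\, n^{k-1}.$$
   Context: Let $G=(V,E)$ be a simple undirected graph with $V=\{v_1,\dots,v_n\}$; user $v_i$ holds its adjacency vector $a_i=(a_{i,1},\dots,a_{i,n})$ with $a_{i,j}=1$ iff $\{v_i,v_j\}\in E$. A graphlet is a simple graph $\mathsf{G}=(\mathsf{V},\mathsf{E})$ with $\mathsf{V}=\{u_1,\dots,u_k\}$; $\mathsf{G}(G)$ denotes the number of distinct subgraphs $(V',E')$ of $G$ (not necessarily induced) isomorphic to $\mathsf{G}$. $A(\mathsf{G})$ is the number of automorphisms of $\mathsf{G}$ (bijections $\pi:\mathsf{V}\to\mathsf{V}$ with $\{\pi(u_i),\pi(u_j)\}\in\mathsf{E}$ iff $\{u_i,u_j\}\in\mathsf{E}$). Algorithm 1: (1) Randomized response: every user $v_i$ reports, independently for each $j\ne i$ (and independently across users), a bit $\tilde a_{i,j}$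 with $\Pr[\tilde a_{i,j}=1]=e^{\epsilon}/(1+e^{\epsilon})$ if $a_{i,j}=1$ and $=1/(1+e^{\epsilon})$ if $a_{i,j}=0$. (2) The server computes $\hat a_{i,j} = \frac{e^{\epsilon}+1}{e^{\epsilon}-1}\tilde a_{i,j} - \frac{1}{e^{\epsilon}-1}$. (3) Let $\mathcal{D}$ be the set of tuples $\mathcal{W}=(v_{\ell_1},\dots,v_{\ell_k})\in V^k$ of pairwise distinct nodes; for each such tuple set $\tilde W(\mathcal{W},\mathsf{G}) = \prod_{\{u_i,u_j\}\in\mathsf{E},\, i<j} \hat a_{\ell_i,\ell_j}$. (4) Output $\tilde{\mathsf{G}}(G) = \big(\sum_{\mathcal{W}\in\mathcal{D}} \tilde W(\mathcal{W},\mathsf{G})\big)/A(\mathsf{G})$. *)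

theory Defs
  imports "HOL-Probability.Probability"
begin

definition simple_graph :: "nat \<Rightarrow> nat set set \<Rightarrow> bool" where
  "simple_graph n E \<longleftrightarrow> (\<forall>e\<in>E. \<exists>i j. i < n \<and> j < n \<and> i \<noteq> j \<and> e = {i, j})"

definition adj :: "nat set set \<Rightarrow> nat \<Rightarrow> nat \<Rightarrow> bool" where
  "adj E i j \<longleftrightarrow> {i, j} \<in> E"

text \<open>Number of (not necessarily induced) subgraphs (V',E') of G=({0..<n},E)
  isomorphic to the graphlet ({0..<k},Eg).\<close>
definition graphlet_count :: "nat \<Rightarrow> nat set set \<Rightarrow> nat \<Rightarrow> nat set set \<Rightarrow> nat" where
  "graphlet_count k Eg n E = card {(V', E'). V' \<subseteq> {..<n} \<and> E' \<subseteq> E \<and> (\<forall>e\<in>E'. e \<subseteq> V') \<and>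
      (\<exists>f. bij_betw f {..<k} V' \<and>
           (\<forall>i<k. \<forall>j<k. {i, j} \<in> Eg \<longleftrightarrow> {f i, f j} \<in> E'))}"

definition num_aut :: "nat \<Rightarrow> nat set set \<Rightarrow> nat" where
  "num_aut k Eg = card {\<pi> \<in> {..<k} \<rightarrow>\<^sub>E {..<k}. bij_betw \<pi> {..<k} {..<k} \<and>
      (\<forall>i<k. \<forall>j<k. {\<pi> i, \<pi> j} \<in> Eg \<longleftrightarrow> {i, j} \<in> Eg)}"

definition rr_pmf :: "real \<Rightarrow> nat \<Rightarrow> nat set set \<Rightarrow> (nat \<times> nat \<Rightarrow> bool) pmf" where
  "rr_pmf \<epsilon> n E = Pi_pmf {(i, j). i < n \<and> j < n \<and> i \<noteq> j} False
     (\<lambda>(i, j). bernoulli_pmf (if adj E i j then exp \<epsilon> / (1 + exp \<epsilon>) else 1 / (1 + exp \<epsilon>)))"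

definition ahat :: "real \<Rightarrow> (nat \<times> nat \<Rightarrow> bool) \<Rightarrow> nat \<Rightarrow> nat \<Rightarrow> real" where
  "ahat \<epsilon> b i j = (exp \<epsilon> + 1) / (exp \<epsilon> - 1) * (if b (i, j) then 1 else 0) - 1 / (exp \<epsilon> - 1)"

definition tuples :: "nat \<Rightarrow> nat \<Rightarrow> (nat \<Rightarrow> nat) set" where
  "tuples k n = {l \<in> {..<k} \<rightarrow>\<^sub>E {..<n}. inj_on l {..<k}}"

definition alg1 :: "real \<Rightarrow> nat \<Rightarrow> nat set set \<Rightarrow> nat \<Rightarrow> (nat \<times> nat \<Rightarrow> bool) \<Rightarrow> real" where
  "alg1 \<epsilon> k Eg n b =
     (\<Sum>l\<in>tuples k n. \<Prod>(i, j)\<in>{(i, j). i < j \<and> j < k \<and> {i, j} \<in> Eg}. ahat \<epsilon> b (l i) (l j))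
     / real (num_aut k Eg)"

end

theory Submission
  imports Defs
begin

(* For a tuple l of distinct nodes, the estimator's term for l is the product of the debiased
   reports over the node pairs (l i, l j) that correspond to graphlet edges, and its mean is the
   product of the true adjacency bits over the same pairs, i.e. the indicator that l embeds the
   graphlet.  Summing these indicators counts every copy once per automorphism, so the estimator
   is unbiased.  Because the reports are independent, the centred terms of two tuples are
   uncorrelated unless the tuples share a node pair.  For a fixed tuple only O(n^(k-2)) tuples
   share a pair with it, and every centred term is bounded by a constant, so the second moment
   of the error is O(n^k * n^(k-2)) = O(n^(2k-2)). *)

lemma expectation_prod_Pi_pmf_subset:
  fixes f :: "'a \<Rightarrow> 'b \<Rightarrow> real"
  assumes "finite A" and "S \<subseteq> A"
    and integrable: "\<And>x. x \<in> S \<Longrightarrow> integrable (measure_pmf (p x)) (f x)"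
  shows "measure_pmf.expectation (Pi_pmf A d p) (\<lambda>y. \<Prod>x\<in>S. f x (y x)) =
         (\<Prod>x\<in>S. measure_pmf.expectation (p x) (f x))"
proof -
  have component: "map_pmf (\<lambda>y. y x) (Pi_pmf A d p) = p x" if "x \<in> S" for x
    using Pi_pmf_component[OF \<open>finite A\<close>, of x d p] that \<open>S \<subseteq> A\<close> by auto
  have "prob_space.indep_vars (Pi_pmf A d p) (\<lambda>_. borel) (\<lambda>x y. f x (y x)) S"
    by (rule prob_space.indep_vars_compose2[OF _ prob_space.indep_vars_subset[OF _ indep_vars_Pi_pmf]])
      (use assms measure_pmf.prob_space_axioms in auto)
  moreover have "integrable (Pi_pmf A d p) (\<lambda>y. f x (y x))" if "x \<in> S" for x
    using integrable[OF that] by (simp flip: component[OF that])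
  ultimately have "measure_pmf.expectation (Pi_pmf A d p) (\<lambda>y. \<Prod>x\<in>S. f x (y x)) =
      (\<Prod>x\<in>S. measure_pmf.expectation (Pi_pmf A d p) (\<lambda>y. f x (y x)))"
    using finite_subset[OF assms(2,1)]
    by (intro prob_space.indep_vars_lebesgue_integral) (auto intro: measure_pmf.prob_space_axioms)
  also have "\<dots> = (\<Prod>x\<in>S. measure_pmf.expectation (p x) (f x))"
    by (intro prod.cong) (simp_all flip: component)
  finally show ?thesis .
qed

lemma (in prob_space) expectation_square_sum_le:
  fixes Z :: "'i \<Rightarrow> 'a \<Rightarrow> real"
  assumes "finite I"
    and integrable: "\<And>i j. i \<in> I \<Longrightarrow> j \<in> I \<Longrightarrow> integrable M (\<lambda>x. Z i x * Z j x)"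
    and bounded: "\<And>i x. i \<in> I \<Longrightarrow> x \<in> space M \<Longrightarrow> \<bar>Z i x\<bar> \<le> B"
    and uncorrelated: "\<And>i j. i \<in> I \<Longrightarrow> j \<in> I \<Longrightarrow> \<not> R i j \<Longrightarrow> expectation (\<lambda>x. Z i x * Z j x) = 0"
    and few_related: "\<And>i. i \<in> I \<Longrightarrow> card {j \<in> I. R i j} \<le> N"
  shows "expectation (\<lambda>x. (\<Sum>i\<in>I. Z i x)\<^sup>2) \<le> B\<^sup>2 * N * card I"
proof -
  have "expectation (\<lambda>x. (\<Sum>i\<in>I. Z i x)\<^sup>2) = (\<Sum>i\<in>I. \<Sum>j\<in>I. expectation (\<lambda>x. Z i x * Z j x))"
    by (simp add: power2_eq_square sum_product integrable Bochner_Integration.integral_sum)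
  also have "\<dots> \<le> (\<Sum>i\<in>I. \<Sum>j\<in>I. B\<^sup>2 * of_bool (R i j))"
  proof (intro sum_mono)
    fix i j assume ij: "i \<in> I" "j \<in> I"
    have "Z i x * Z j x \<le> B\<^sup>2" if "x \<in> space M" for x
    proof -
      have "Z i x * Z j x \<le> \<bar>Z i x\<bar> * \<bar>Z j x\<bar>"
        by (simp flip: abs_mult)
      also have "\<dots> \<le> B * B"
        using bounded[OF ij(1) that] bounded[OF ij(2) that] by (intro mult_mono) auto
      finally show ?thesis by (simp add: power2_eq_square)
    qed
    then have "expectation (\<lambda>x. Z i x * Z j x) \<le> B\<^sup>2"
      by (intro integral_le_const integrable ij AE_I2)
    then show "expectation (\<lambda>x. Z i x * Z j x) \<le> B\<^sup>2 * of_bool (R i j)"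
      using uncorrelated[OF ij] by (cases "R i j") auto
  qed
  also have "\<dots> = (\<Sum>i\<in>I. B\<^sup>2 * card {j \<in> I. R i j})"
    by (simp add: sum_distrib_left[symmetric] of_bool_def sum.If_cases \<open>finite I\<close> Int_def)
  also have "\<dots> \<le> (\<Sum>i\<in>I. B\<^sup>2 * N)"
    by (intro sum_mono mult_left_mono) (auto dest: few_related)
  finally show ?thesis by (simp add: mult_ac)
qed

lemma card_eq_mult_card_image:
  assumes "finite A" and fibres: "\<And>x. x \<in> A \<Longrightarrow> card {y \<in> A. f y = f x} = c"
  shows "card A = c * card (f ` A)"
proof -
  have "{z \<in> f ` A. f x = z} = {f x}" if "x \<in> A" for x
    using that by auto
  then have "card A = (\<Sum>x\<in>A. card {z \<in> f ` A. f x = z})"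
    by simp
  also have "\<dots> = c * card (f ` A)"
    using \<open>finite A\<close> fibres by (intro sum_multicount) auto
  finally show ?thesis .
qed

lemma card_PiE_fix_two_le:
  assumes "finite A" "finite B" "a \<in> A" "b \<in> A" "a \<noteq> b"
  shows "card {l \<in> A \<rightarrow>\<^sub>E B. l a = x \<and> l b = y} \<le> card B ^ (card A - 2)"
proof -
  let ?T = "{l \<in> A \<rightarrow>\<^sub>E B. l a = x \<and> l b = y}"
  have "inj_on (\<lambda>l. restrict l (A - {a, b})) ?T"
  proof (rule inj_onI)
    fix l l' assume l: "l \<in> ?T" and l': "l' \<in> ?T"
      and eq: "restrict l (A - {a, b}) = restrict l' (A - {a, b})"
    have "l i = l' i" if "i \<in> A" for i
      using that l l' fun_cong[OF eq, of i] by (cases "i \<in> {a, b}") auto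
    with l l' show "l = l'"
      by (intro PiE_ext[of l A "\<lambda>_. B"]) auto
  qed
  moreover have "(\<lambda>l. restrict l (A - {a, b})) ` ?T \<subseteq> (A - {a, b}) \<rightarrow>\<^sub>E B"
    by (intro image_subsetI) (auto simp: restrict_PiE_iff PiE_iff)
  ultimately have "card ?T \<le> card ((A - {a, b}) \<rightarrow>\<^sub>E B)"
    using assms(1,2) by (intro card_inj_on_le) (auto intro: finite_PiE)
  also have "\<dots> = card B ^ (card A - 2)"
    using assms by (simp add: card_funcsetE card_Diff_subset numeral_2_eq_2)
  finally show ?thesis .
qed

lemma prod_of_bool:
  "finite A \<Longrightarrow> (\<Prod>x\<in>A. of_bool (P x) :: 'a :: comm_semiring_1) = of_bool (\<forall>x\<in>A. P x)"
  by (induction A rule: finite_induct) auto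

section \<open>Randomized response\<close>

definition rr_pairs :: "nat \<Rightarrow> (nat \<times> nat) set" where
  "rr_pairs n = {(i, j). i < n \<and> j < n \<and> i \<noteq> j}"

definition rr_bit :: "real \<Rightarrow> bool \<Rightarrow> bool pmf" where
  "rr_bit \<epsilon> a = bernoulli_pmf (if a then exp \<epsilon> / (1 + exp \<epsilon>) else 1 / (1 + exp \<epsilon>))"

definition debias :: "real \<Rightarrow> bool \<Rightarrow> real" where
  "debias \<epsilon> v = (exp \<epsilon> + 1) / (exp \<epsilon> - 1) * of_bool v - 1 / (exp \<epsilon> - 1)"

definition rr_monomial :: "real \<Rightarrow> (nat \<times> nat) set \<Rightarrow> (nat \<times> nat \<Rightarrow> bool) \<Rightarrow> real" where
  "rr_monomial \<epsilon> S b = (\<Prod>x\<in>S. debias \<epsilon> (b x))"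

definition adj_monomial :: "nat set set \<Rightarrow> (nat \<times> nat) set \<Rightarrow> real" where
  "adj_monomial E S = (\<Prod>(i, j)\<in>S. of_bool (adj E i j))"

lemma finite_rr_pairs: "finite (rr_pairs n)"
  by (rule finite_subset[of _ "{..<n} \<times> {..<n}"]) (auto simp: rr_pairs_def)

lemma rr_pmf_altdef: "rr_pmf \<epsilon> n E = Pi_pmf (rr_pairs n) False (\<lambda>(i, j). rr_bit \<epsilon> (adj E i j))"
  by (simp add: rr_pmf_def rr_pairs_def rr_bit_def case_prod_unfold)

lemma integrable_rr_pmf: "integrable (measure_pmf (rr_pmf \<epsilon> n E)) (f :: _ \<Rightarrow> real)"
  by (intro integrable_measure_pmf_finite)
    (simp add: rr_pmf_altdef set_Pi_pmf finite_rr_pairs finite_PiE_dflt)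

lemma ahat_eq_debias: "ahat \<epsilon> b i j = debias \<epsilon> (b (i, j))"
  by (simp add: ahat_def debias_def)

lemma debias_simps:
  "debias \<epsilon> True = exp \<epsilon> / (exp \<epsilon> - 1)" "debias \<epsilon> False = - 1 / (exp \<epsilon> - 1)"
  by (simp_all add: debias_def diff_divide_distrib[symmetric])

lemma expectation_debias_rr_bit:
  assumes "\<epsilon> > 0"
  shows "measure_pmf.expectation (rr_bit \<epsilon> a) (debias \<epsilon>) = of_bool a"
proof -
  define e where "e = exp \<epsilon>"
  define p where "p = (if a then e / (1 + e) else 1 / (1 + e))"
  have "e > 1" using assms by (simp add: e_def)
  then have "0 \<le> p" "p \<le> 1" by (auto simp: p_def)
  moreover have "rr_bit \<epsilon> a = bernoulli_pmf p"
    by (simp add: rr_bit_def p_def e_def)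
  ultimately have "measure_pmf.expectation (rr_bit \<epsilon> a) (debias \<epsilon>) = (e + 1) / (e - 1) * p - 1 / (e - 1)"
    by (simp add: debias_def algebra_simps add_divide_distrib[symmetric] flip: e_def)
  also have "\<dots> = of_bool a"
    using \<open>e > 1\<close> by (simp add: p_def add.commute[of 1 e] diff_divide_distrib[symmetric])
  finally show ?thesis .
qed

lemma abs_debias_le:
  assumes "\<epsilon> > 0"
  shows "\<bar>debias \<epsilon> v\<bar> \<le> (exp \<epsilon> + 1) / (exp \<epsilon> - 1)"
proof -
  have "exp \<epsilon> > 1" using assms by simp
  then show ?thesis
    by (cases v) (simp_all add: debias_simps divide_right_mono)
qed

lemma abs_rr_monomial_le:
  assumes "\<epsilon> > 0"
  shows "\<bar>rr_monomial \<epsilon> S b\<bar> \<le> ((exp \<epsilon> + 1) / (exp \<epsilon> - 1)) ^ card S"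
proof -
  have "exp \<epsilon> > 1" using assms by simp
  then have "1 \<le> (exp \<epsilon> + 1) / (exp \<epsilon> - 1)" by simp
  then show ?thesis
    unfolding rr_monomial_def abs_prod
    by (intro prod_le_power) (auto intro: abs_debias_le[OF assms])
qed

lemma expectation_rr_monomial:
  assumes "S \<subseteq> rr_pairs n" "\<epsilon> > 0"
  shows "measure_pmf.expectation (rr_pmf \<epsilon> n E) (rr_monomial \<epsilon> S) = adj_monomial E S"
  unfolding rr_monomial_def adj_monomial_def rr_pmf_altdef
  by (subst expectation_prod_Pi_pmf_subset[OF finite_rr_pairs assms(1)])
    (auto simp: expectation_debias_rr_bit[OF assms(2)] integrable_measure_pmf_finite
      intro!: prod.cong)

lemma expectation_rr_monomial_errors_disjoint:
  assumes "S \<subseteq> rr_pairs n" "T \<subseteq> rr_pairs n" "S \<inter> T = {}" "\<epsilon> > 0"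
  shows "measure_pmf.expectation (rr_pmf \<epsilon> n E)
    (\<lambda>b. (rr_monomial \<epsilon> S b - adj_monomial E S) * (rr_monomial \<epsilon> T b - adj_monomial E T)) = 0"
proof -
  have fin: "finite S" "finite T"
    using assms(1,2) finite_rr_pairs by (auto intro: finite_subset)
  have "rr_monomial \<epsilon> S b * rr_monomial \<epsilon> T b = rr_monomial \<epsilon> (S \<union> T) b" for b
    unfolding rr_monomial_def by (rule prod.union_disjoint[symmetric]) (use fin assms(3) in auto)
  moreover have "adj_monomial E S * adj_monomial E T = adj_monomial E (S \<union> T)"
    unfolding adj_monomial_def by (rule prod.union_disjoint[symmetric]) (use fin assms(3) in auto)
  ultimately show ?thesis
    using assms expectation_rr_monomial[of _ n \<epsilon> E]
    by (simp add: algebra_simps integrable_rr_pmf)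
qed

section \<open>Embeddings of a graphlet\<close>

lemma simple_graph_edgeE:
  assumes "simple_graph n E" "e \<in> E"
  obtains i j where "i < n" "j < n" "i \<noteq> j" "e = {i, j}"
  using assms by (auto simp: simple_graph_def)

lemma simple_graph_edge_image_iff:
  assumes "simple_graph k Eg" "inj_on l {..<k}" "i < k" "j < k"
  shows "{l i, l j} \<in> (`) l ` Eg \<longleftrightarrow> {i, j} \<in> Eg"
proof
  assume "{l i, l j} \<in> (`) l ` Eg"
  then obtain e where e: "e \<in> Eg" "{l i, l j} = l ` e" by auto
  obtain a b where ab: "a < k" "b < k" "e = {a, b}"
    using simple_graph_edgeE[OF assms(1) e(1)] by metis
  have "(l i = l a \<and> l j = l b) \<or> (l i = l b \<and> l j = l a)"
    using e(2) ab(3) by (auto simp: doubleton_eq_iff)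
  then have "(i = a \<and> j = b) \<or> (i = b \<and> j = a)"
    using assms(2-4) ab by (auto dest: inj_onD)
  then show "{i, j} \<in> Eg" using e ab by (auto simp: insert_commute)
next
  assume "{i, j} \<in> Eg"
  then show "{l i, l j} \<in> (`) l ` Eg" by (intro image_eqI[where x="{i, j}"]) auto
qed

definition automorphisms :: "nat \<Rightarrow> nat set set \<Rightarrow> (nat \<Rightarrow> nat) set" where
  "automorphisms k Eg = {\<pi> \<in> {..<k} \<rightarrow>\<^sub>E {..<k}. bij_betw \<pi> {..<k} {..<k} \<and>
      (\<forall>i<k. \<forall>j<k. {\<pi> i, \<pi> j} \<in> Eg \<longleftrightarrow> {i, j} \<in> Eg)}"

definition graphlet_copies :: "nat \<Rightarrow> nat set set \<Rightarrow> nat \<Rightarrow> nat set set \<Rightarrow> (nat set \<times> nat set set) set" where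
  "graphlet_copies k Eg n E = {(V', E'). V' \<subseteq> {..<n} \<and> E' \<subseteq> E \<and> (\<forall>e\<in>E'. e \<subseteq> V') \<and>
      (\<exists>f. bij_betw f {..<k} V' \<and> (\<forall>i<k. \<forall>j<k. {i, j} \<in> Eg \<longleftrightarrow> {f i, f j} \<in> E'))}"

definition embedded_copy :: "nat \<Rightarrow> nat set set \<Rightarrow> (nat \<Rightarrow> nat) \<Rightarrow> nat set \<times> nat set set" where
  "embedded_copy k Eg l = (l ` {..<k}, (`) l ` Eg)"

definition embeddings :: "nat \<Rightarrow> nat set set \<Rightarrow> nat \<Rightarrow> nat set set \<Rightarrow> (nat \<Rightarrow> nat) set" where
  "embeddings k Eg n E = {l \<in> tuples k n. (`) l ` Eg \<subseteq> E}"

lemma num_aut_eq_card: "num_aut k Eg = card (automorphisms k Eg)"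
  by (simp add: num_aut_def automorphisms_def)

lemma graphlet_count_eq_card: "graphlet_count k Eg n E = card (graphlet_copies k Eg n E)"
  by (simp add: graphlet_count_def graphlet_copies_def)

lemma finite_tuples: "finite (tuples k n)"
  by (rule finite_subset[of _ "{..<k} \<rightarrow>\<^sub>E {..<n}"]) (auto simp: tuples_def intro: finite_PiE)

lemma num_aut_pos: "num_aut k Eg > 0"
proof -
  have "finite (automorphisms k Eg)"
    by (rule finite_subset[of _ "{..<k} \<rightarrow>\<^sub>E {..<k}"]) (auto simp: automorphisms_def intro: finite_PiE)
  moreover have "restrict id {..<k} \<in> automorphisms k Eg"
    by (auto simp: automorphisms_def bij_betw_def inj_on_def)
  ultimately show ?thesis
    by (auto simp: num_aut_eq_card card_gt_0_iff)
qed

lemma automorphism_image_edges: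
  assumes sg: "simple_graph k Eg" and "\<pi> \<in> automorphisms k Eg"
  shows "(`) \<pi> ` Eg = Eg"
proof -
  have bij: "bij_betw \<pi> {..<k} {..<k}"
    and edge_iff: "\<And>i j. i < k \<Longrightarrow> j < k \<Longrightarrow> {\<pi> i, \<pi> j} \<in> Eg \<longleftrightarrow> {i, j} \<in> Eg"
    using assms(2) by (auto simp: automorphisms_def)
  show ?thesis
  proof (intro equalityI subsetI)
    fix e' assume "e' \<in> (`) \<pi> ` Eg"
    then obtain e where e: "e \<in> Eg" "e' = \<pi> ` e" by auto
    from e(1) show "e' \<in> Eg"
      by (elim simple_graph_edgeE[OF sg]) (use e edge_iff in auto)
  next
    fix e' assume "e' \<in> Eg"
    then obtain c d where cd: "c < k" "d < k" "e' = {c, d}"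
      by (elim simple_graph_edgeE[OF sg])
    then obtain a b where "a < k" "b < k" "c = \<pi> a" "d = \<pi> b"
      using bij by (metis bij_betw_imp_surj_on imageE lessThan_iff)
    with cd \<open>e' \<in> Eg\<close> edge_iff show "e' \<in> (`) \<pi> ` Eg"
      by (intro image_eqI[where x="{a, b}"]) auto
  qed
qed

lemma embedded_copy_compose_automorphism:
  assumes sg: "simple_graph k Eg" and l: "l \<in> tuples k n" and \<pi>: "\<pi> \<in> automorphisms k Eg"
  shows "restrict (l \<circ> \<pi>) {..<k} \<in> tuples k n"
    and "embedded_copy k Eg (restrict (l \<circ> \<pi>) {..<k}) = embedded_copy k Eg l"
proof -
  have bij: "bij_betw \<pi> {..<k} {..<k}" and \<pi>k: "\<And>i. i < k \<Longrightarrow> \<pi> i < k"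
    using \<pi> by (auto simp: automorphisms_def)
  have inj: "inj_on l {..<k}" and lk: "\<And>i. i < k \<Longrightarrow> l i < n"
    using l by (auto simp: tuples_def)
  show "restrict (l \<circ> \<pi>) {..<k} \<in> tuples k n"
    using bij inj lk \<pi>k by (auto simp: tuples_def bij_betw_def inj_on_def)
  have edges_below: "e \<subseteq> {..<k}" if "e \<in> Eg" for e
    using that by (elim simple_graph_edgeE[OF sg]) auto
  have image_restrict: "restrict (l \<circ> \<pi>) {..<k} ` e = l ` \<pi> ` e" if "e \<subseteq> {..<k}" for e
    using that by auto
  have "(`) (restrict (l \<circ> \<pi>) {..<k}) ` Eg = (`) l ` (`) \<pi> ` Eg"
    using image_restrict edges_below by (auto simp: image_image intro!: image_cong)
  moreover have "restrict (l \<circ> \<pi>) {..<k} ` {..<k} = l ` {..<k}"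
    using image_restrict[of "{..<k}"] bij by (simp add: bij_betw_def)
  ultimately show "embedded_copy k Eg (restrict (l \<circ> \<pi>) {..<k}) = embedded_copy k Eg l"
    using automorphism_image_edges[OF sg \<pi>] by (simp add: embedded_copy_def)
qed

lemma embedded_copy_eq_imp_automorphism:
  assumes sg: "simple_graph k Eg" and l: "l \<in> tuples k n" and l': "l' \<in> tuples k n"
    and eq: "embedded_copy k Eg l' = embedded_copy k Eg l"
  obtains \<pi> where "\<pi> \<in> automorphisms k Eg" "l' = restrict (l \<circ> \<pi>) {..<k}"
proof
  have inj: "inj_on l {..<k}" and inj': "inj_on l' {..<k}" and l'Pi: "l' \<in> {..<k} \<rightarrow>\<^sub>E {..<n}"
    using l l' by (auto simp: tuples_def)
  have vertices: "l' ` {..<k} = l ` {..<k}" and edges: "(`) l' ` Eg = (`) l ` Eg"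
    using eq by (auto simp: embedded_copy_def)
  define \<pi> where "\<pi> = restrict (\<lambda>i. the_inv_into {..<k} l (l' i)) {..<k}"
  have \<pi>k: "\<pi> i < k" and l\<pi>: "l (\<pi> i) = l' i" if "i < k" for i
  proof -
    have "l' i \<in> l ` {..<k}" using vertices that by auto
    then show "\<pi> i < k" "l (\<pi> i) = l' i"
      using that inj by (auto simp: \<pi>_def the_inv_into_f_f)
  qed
  have "inj_on \<pi> {..<k}"
    using inj' l\<pi> by (metis inj_onD inj_onI lessThan_iff)
  then have "bij_betw \<pi> {..<k} {..<k}"
    using \<pi>k endo_inj_surj[of "{..<k}" \<pi>] by (auto simp: bij_betw_def)
  moreover have "{\<pi> i, \<pi> j} \<in> Eg \<longleftrightarrow> {i, j} \<in> Eg" if "i < k" "j < k" for i j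
  proof -
    have "{\<pi> i, \<pi> j} \<in> Eg \<longleftrightarrow> {l (\<pi> i), l (\<pi> j)} \<in> (`) l ` Eg"
      using simple_graph_edge_image_iff[OF sg inj \<pi>k \<pi>k] that by simp
    also have "\<dots> \<longleftrightarrow> {l' i, l' j} \<in> (`) l' ` Eg"
      using l\<pi> that edges by simp
    also have "\<dots> \<longleftrightarrow> {i, j} \<in> Eg"
      using simple_graph_edge_image_iff[OF sg inj' that] .
    finally show ?thesis .
  qed
  ultimately show "\<pi> \<in> automorphisms k Eg"
    using \<pi>k by (auto simp: automorphisms_def \<pi>_def)
  show "l' = restrict (l \<circ> \<pi>) {..<k}"
    using l'Pi l\<pi> by (intro PiE_ext[OF l'Pi]) (auto simp: PiE_iff)
qed

lemma card_embedded_copy_fibre: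
  assumes sg: "simple_graph k Eg" and l: "l \<in> embeddings k Eg n E"
  shows "card {l' \<in> embeddings k Eg n E. embedded_copy k Eg l' = embedded_copy k Eg l} = num_aut k Eg"
proof -
  define compose where "compose \<pi> = restrict (l \<circ> \<pi>) {..<k}" for \<pi>
  have lt: "l \<in> tuples k n" and l_edges: "(`) l ` Eg \<subseteq> E"
    using l by (auto simp: embeddings_def)
  have "{l' \<in> embeddings k Eg n E. embedded_copy k Eg l' = embedded_copy k Eg l} =
      compose ` automorphisms k Eg"
  proof (intro equalityI subsetI)
    fix l' assume "l' \<in> {l' \<in> embeddings k Eg n E. embedded_copy k Eg l' = embedded_copy k Eg l}"
    then show "l' \<in> compose ` automorphisms k Eg"
      by (auto simp: embeddings_def compose_def elim!: embedded_copy_eq_imp_automorphism[OF sg lt])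
  next
    fix l' assume "l' \<in> compose ` automorphisms k Eg"
    then obtain \<pi> where "\<pi> \<in> automorphisms k Eg" "l' = compose \<pi>" by auto
    with embedded_copy_compose_automorphism[OF sg lt] l_edges
    show "l' \<in> {l' \<in> embeddings k Eg n E. embedded_copy k Eg l' = embedded_copy k Eg l}"
      by (auto simp: embeddings_def embedded_copy_def compose_def)
  qed
  moreover have "inj_on compose (automorphisms k Eg)"
  proof (rule inj_onI)
    fix \<pi> \<sigma> assume \<pi>: "\<pi> \<in> automorphisms k Eg" and \<sigma>: "\<sigma> \<in> automorphisms k Eg"
      and "compose \<pi> = compose \<sigma>"
    then have "l (\<pi> i) = l (\<sigma> i)" if "i < k" for i
      using that by (metis compose_def comp_apply lessThan_iff restrict_apply')
    moreover have "inj_on l {..<k}" using lt by (simp add: tuples_def)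
    moreover have "\<pi> \<in> {..<k} \<rightarrow>\<^sub>E {..<k}" "\<sigma> \<in> {..<k} \<rightarrow>\<^sub>E {..<k}"
      using \<pi> \<sigma> by (auto simp: automorphisms_def)
    ultimately show "\<pi> = \<sigma>"
      by (intro PiE_ext[of _ "{..<k}" "\<lambda>_. {..<k}"]) (auto dest: inj_onD)
  qed
  ultimately show ?thesis
    by (simp add: card_image num_aut_eq_card)
qed

lemma embedded_copy_in_graphlet_copies:
  assumes sg: "simple_graph k Eg" and l: "l \<in> embeddings k Eg n E"
  shows "embedded_copy k Eg l \<in> graphlet_copies k Eg n E"
proof -
  have inj: "inj_on l {..<k}" and "l ` {..<k} \<subseteq> {..<n}" and "(`) l ` Eg \<subseteq> E"
    using l by (auto simp: embeddings_def tuples_def)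
  moreover have "\<forall>e'\<in>(`) l ` Eg. e' \<subseteq> l ` {..<k}"
    by (auto elim: simple_graph_edgeE[OF sg])
  moreover have "\<forall>i<k. \<forall>j<k. {i, j} \<in> Eg \<longleftrightarrow> {l i, l j} \<in> (`) l ` Eg"
    using simple_graph_edge_image_iff[OF sg inj] by blast
  ultimately show ?thesis
    unfolding graphlet_copies_def embedded_copy_def using inj_on_imp_bij_betw[OF inj] by blast
qed

lemma graphlet_copy_embeddedE:
  assumes sgk: "simple_graph k Eg" and sgn: "simple_graph n E"
    and "c \<in> graphlet_copies k Eg n E"
  obtains l where "l \<in> embeddings k Eg n E" "c = embedded_copy k Eg l"
proof -
  obtain V' E' f where c: "c = (V', E')" and V': "V' \<subseteq> {..<n}" and E': "E' \<subseteq> E"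
    and EV: "\<forall>e\<in>E'. e \<subseteq> V'" and f: "bij_betw f {..<k} V'"
    and f_edges: "\<forall>i<k. \<forall>j<k. {i, j} \<in> Eg \<longleftrightarrow> {f i, f j} \<in> E'"
    using assms(3) unfolding graphlet_copies_def by blast
  define l where "l = restrict f {..<k}"
  have l_image: "l ` {..<k} = V'"
    using f by (auto simp: l_def bij_betw_def)
  have l_inj: "inj_on l {..<k}"
    using f by (auto simp: l_def bij_betw_def inj_on_def)
  have l_edges: "(`) l ` Eg = E'"
  proof (intro equalityI subsetI)
    fix e' assume "e' \<in> (`) l ` Eg"
    then obtain e where e: "e \<in> Eg" "e' = l ` e" by auto
    from e(1) show "e' \<in> E'"
      by (elim simple_graph_edgeE[OF sgk]) (use e f_edges in \<open>auto simp: l_def\<close>)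
  next
    fix e' assume "e' \<in> E'"
    then obtain x z where xz: "e' = {x, z}"
      using E' simple_graph_edgeE[OF sgn] by blast
    then obtain a b where ab: "a < k" "b < k" "x = l a" "z = l b"
      using EV \<open>e' \<in> E'\<close> l_image by (metis imageE insert_subset lessThan_iff)
    then have "{a, b} \<in> Eg"
      using f_edges \<open>e' \<in> E'\<close> xz by (simp add: l_def)
    then show "e' \<in> (`) l ` Eg"
      using xz ab by (intro image_eqI[where x="{a, b}"]) auto
  qed
  have "l \<in> embeddings k Eg n E"
    using l_image l_inj l_edges V' E' by (auto simp: embeddings_def tuples_def l_def)
  moreover have "c = embedded_copy k Eg l"
    using c l_image l_edges by (simp add: embedded_copy_def)
  ultimately show ?thesis using that by blast
qed

lemma embedded_copy_image:
  assumes "simple_graph k Eg" "simple_graph n E"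
  shows "embedded_copy k Eg ` embeddings k Eg n E = graphlet_copies k Eg n E"
  using embedded_copy_in_graphlet_copies[OF assms(1)] graphlet_copy_embeddedE[OF assms]
  by (metis image_subsetI subsetI subset_antisym image_eqI)

lemma card_embeddings:
  assumes "simple_graph k Eg" "simple_graph n E"
  shows "card (embeddings k Eg n E) = num_aut k Eg * graphlet_count k Eg n E"
proof -
  have "finite (embeddings k Eg n E)"
    by (rule finite_subset[OF _ finite_tuples]) (auto simp: embeddings_def)
  then have "card (embeddings k Eg n E) =
      num_aut k Eg * card (embedded_copy k Eg ` embeddings k Eg n E)"
    by (rule card_eq_mult_card_image[OF _ card_embedded_copy_fibre[OF assms(1)]])
  then show ?thesis
    by (simp add: graphlet_count_eq_card embedded_copy_image[OF assms])
qed

section \<open>Error of the estimator\<close>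

definition graphlet_pairs :: "nat \<Rightarrow> nat set set \<Rightarrow> (nat \<times> nat) set" where
  "graphlet_pairs k Eg = {(i, j). i < j \<and> j < k \<and> {i, j} \<in> Eg}"

(* Ordered pairs: the reports b (x, y) and b (y, x) are independent, so two tuples are correlated
   only if they share an ordered pair. *)
definition tuple_pairs :: "nat \<Rightarrow> nat set set \<Rightarrow> (nat \<Rightarrow> nat) \<Rightarrow> (nat \<times> nat) set" where
  "tuple_pairs k Eg l = (\<lambda>(i, j). (l i, l j)) ` graphlet_pairs k Eg"

lemma finite_graphlet_pairs: "finite (graphlet_pairs k Eg)"
  by (rule finite_subset[of _ "{..<k} \<times> {..<k}"]) (auto simp: graphlet_pairs_def)

lemma inj_on_tuple_pair_map:
  assumes "inj_on l {..<k}"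
  shows "inj_on (\<lambda>(i, j). (l i, l j)) (graphlet_pairs k Eg)"
  using assms by (auto simp: inj_on_def graphlet_pairs_def)

lemma card_tuple_pairs:
  assumes "l \<in> tuples k n"
  shows "card (tuple_pairs k Eg l) = card (graphlet_pairs k Eg)"
  using assms by (simp add: tuple_pairs_def card_image inj_on_tuple_pair_map tuples_def)

lemma tuple_pairs_subset_rr_pairs:
  assumes "l \<in> tuples k n"
  shows "tuple_pairs k Eg l \<subseteq> rr_pairs n"
  using assms by (auto simp: tuple_pairs_def graphlet_pairs_def rr_pairs_def tuples_def PiE_iff
      dest: inj_onD)

lemma alg1_altdef:
  "alg1 \<epsilon> k Eg n b = (\<Sum>l\<in>tuples k n. rr_monomial \<epsilon> (tuple_pairs k Eg l) b) / num_aut k Eg"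
proof -
  have "rr_monomial \<epsilon> (tuple_pairs k Eg l) b = (\<Prod>(i, j)\<in>graphlet_pairs k Eg. ahat \<epsilon> b (l i) (l j))"
    if "l \<in> tuples k n" for l
    using that unfolding rr_monomial_def tuple_pairs_def
    by (subst prod.reindex[OF inj_on_tuple_pair_map]) (auto simp: tuples_def ahat_eq_debias
        intro!: prod.cong)
  then show ?thesis
    by (simp add: alg1_def graphlet_pairs_def)
qed

lemma graphlet_pairs_images_iff:
  assumes "simple_graph k Eg"
  shows "(\<forall>(i, j)\<in>graphlet_pairs k Eg. {l i, l j} \<in> E) \<longleftrightarrow> (`) l ` Eg \<subseteq> E"
proof
  assume pairs: "\<forall>(i, j)\<in>graphlet_pairs k Eg. {l i, l j} \<in> E"
  show "(`) l ` Eg \<subseteq> E"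
  proof
    fix e' assume "e' \<in> (`) l ` Eg"
    then obtain e where "e \<in> Eg" "e' = l ` e" by auto
    moreover obtain a b where "a < k" "b < k" "a \<noteq> b" "e = {a, b}"
      using simple_graph_edgeE[OF assms \<open>e \<in> Eg\<close>] by metis
    ultimately have "(min a b, max a b) \<in> graphlet_pairs k Eg" "e' = {l (min a b), l (max a b)}"
      by (auto simp: graphlet_pairs_def min_def max_def insert_commute)
    then show "e' \<in> E"
      using pairs by auto
  qed
qed (auto simp: graphlet_pairs_def)

lemma adj_monomial_tuple_pairs:
  assumes "simple_graph k Eg" "l \<in> tuples k n"
  shows "adj_monomial E (tuple_pairs k Eg l) = of_bool (l \<in> embeddings k Eg n E)"
proof -
  have "adj_monomial E (tuple_pairs k Eg l) = (\<Prod>(i, j)\<in>graphlet_pairs k Eg. of_bool ({l i, l j} \<in> E))"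
    using assms(2) unfolding adj_monomial_def tuple_pairs_def
    by (subst prod.reindex[OF inj_on_tuple_pair_map]) (auto simp: tuples_def adj_def
        intro!: prod.cong)
  also have "\<dots> = of_bool (\<forall>(i, j)\<in>graphlet_pairs k Eg. {l i, l j} \<in> E)"
    by (simp add: case_prod_unfold prod_of_bool finite_graphlet_pairs)
  finally show ?thesis
    using assms by (simp add: graphlet_pairs_images_iff embeddings_def)
qed

definition centred_term ::
    "real \<Rightarrow> nat \<Rightarrow> nat set set \<Rightarrow> nat set set \<Rightarrow> (nat \<Rightarrow> nat) \<Rightarrow> (nat \<times> nat \<Rightarrow> bool) \<Rightarrow> real" where
  "centred_term \<epsilon> k Eg E l b =
     rr_monomial \<epsilon> (tuple_pairs k Eg l) b - adj_monomial E (tuple_pairs k Eg l)"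

lemma alg1_error_eq:
  assumes "simple_graph k Eg" "simple_graph n E"
  shows "alg1 \<epsilon> k Eg n b - graphlet_count k Eg n E =
    (\<Sum>l\<in>tuples k n. centred_term \<epsilon> k Eg E l b) / num_aut k Eg"
proof -
  have "(\<Sum>l\<in>tuples k n. adj_monomial E (tuple_pairs k Eg l)) = card (embeddings k Eg n E)"
    using finite_tuples
    by (simp add: adj_monomial_tuple_pairs[OF assms(1)] of_bool_def sum.If_cases embeddings_def
        Int_def)
  also have "\<dots> = real (num_aut k Eg) * graphlet_count k Eg n E"
    by (simp add: card_embeddings[OF assms])
  finally show ?thesis
    using num_aut_pos[of k Eg]
    by (simp add: alg1_altdef centred_term_def sum_subtractf diff_divide_distrib)
qed

lemma card_overlapping_tuples_le:
  assumes "l \<in> tuples k n"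
  shows "card {l' \<in> tuples k n. tuple_pairs k Eg l \<inter> tuple_pairs k Eg l' \<noteq> {}}
    \<le> card (graphlet_pairs k Eg) ^ 2 * n ^ (k - 2)"
proof -
  let ?P = "graphlet_pairs k Eg"
  define matching where "matching p q = {l' \<in> {..<k} \<rightarrow>\<^sub>E {..<n}. l' (fst q) = l (fst p) \<and> l' (snd q) = l (snd p)}"
    for p q :: "nat \<times> nat"
  have finite_matching: "finite (matching p q)" for p q
    by (rule finite_subset[of _ "{..<k} \<rightarrow>\<^sub>E {..<n}"]) (auto simp: matching_def intro: finite_PiE)
  have "{l' \<in> tuples k n. tuple_pairs k Eg l \<inter> tuple_pairs k Eg l' \<noteq> {}} \<subseteq> (\<Union>p\<in>?P. \<Union>q\<in>?P. matching p q)"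
    by (force simp: tuple_pairs_def tuples_def matching_def)
  then have "card {l' \<in> tuples k n. tuple_pairs k Eg l \<inter> tuple_pairs k Eg l' \<noteq> {}}
      \<le> card (\<Union>p\<in>?P. \<Union>q\<in>?P. matching p q)"
    by (intro card_mono finite_UN_I finite_graphlet_pairs finite_matching)
  also have "\<dots> \<le> (\<Sum>p\<in>?P. \<Sum>q\<in>?P. card (matching p q))"
    by (intro order.trans[OF card_UN_le] sum_mono card_UN_le finite_graphlet_pairs)
  also have "\<dots> \<le> (\<Sum>p\<in>?P. \<Sum>q\<in>?P. n ^ (k - 2))"
  proof (intro sum_mono)
    fix p q assume "q \<in> ?P"
    then have "fst q < k" "snd q < k" "fst q \<noteq> snd q"
      by (auto simp: graphlet_pairs_def)
    then show "card (matching p q) \<le> n ^ (k - 2)"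
      using card_PiE_fix_two_le[of "{..<k}" "{..<n}" "fst q" "snd q"] by (simp add: matching_def)
  qed
  also have "\<dots> = card ?P ^ 2 * n ^ (k - 2)"
    by (simp add: power2_eq_square)
  finally show ?thesis .
qed

lemma card_tuples_le: "card (tuples k n) \<le> n ^ k"
proof -
  have "card (tuples k n) \<le> card ({..<k} \<rightarrow>\<^sub>E {..<n})"
    by (intro card_mono) (auto simp: tuples_def intro: finite_PiE)
  then show ?thesis
    by (simp add: card_funcsetE)
qed

lemma abs_centred_term_le:
  assumes "simple_graph k Eg" "l \<in> tuples k n" "\<epsilon> > 0"
  shows "\<bar>centred_term \<epsilon> k Eg E l b\<bar> \<le> ((exp \<epsilon> + 1) / (exp \<epsilon> - 1)) ^ card (graphlet_pairs k Eg) + 1"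
  using abs_rr_monomial_le[OF assms(3), of "tuple_pairs k Eg l" b]
  by (simp add: centred_term_def card_tuple_pairs[OF assms(2)] adj_monomial_tuple_pairs[OF assms(1,2)]
      abs_diff_le_iff abs_le_iff)

lemma expectation_square_sum_centred_terms_le:
  assumes "simple_graph k Eg" "k \<ge> 2" "\<epsilon> > 0"
  shows "measure_pmf.expectation (rr_pmf \<epsilon> n E) (\<lambda>b. (\<Sum>l\<in>tuples k n. centred_term \<epsilon> k Eg E l b)\<^sup>2)
    \<le> ((((exp \<epsilon> + 1) / (exp \<epsilon> - 1)) ^ card (graphlet_pairs k Eg) + 1)
        * card (graphlet_pairs k Eg) * real n ^ (k - 1))\<^sup>2"
    (is "?lhs \<le> (?B * ?p * _)\<^sup>2")
proof -
  have "?lhs \<le> ?B\<^sup>2 * real (card (graphlet_pairs k Eg) ^ 2 * n ^ (k - 2)) * card (tuples k n)"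
  proof (rule measure_pmf.expectation_square_sum_le[where R = "\<lambda>l l'. tuple_pairs k Eg l \<inter> tuple_pairs k Eg l' \<noteq> {}"])
    fix l l' assume "l \<in> tuples k n" "l' \<in> tuples k n" "\<not> tuple_pairs k Eg l \<inter> tuple_pairs k Eg l' \<noteq> {}"
    then show "measure_pmf.expectation (rr_pmf \<epsilon> n E) (\<lambda>b. centred_term \<epsilon> k Eg E l b * centred_term \<epsilon> k Eg E l' b) = 0"
      unfolding centred_term_def
      by (intro expectation_rr_monomial_errors_disjoint tuple_pairs_subset_rr_pairs \<open>\<epsilon> > 0\<close>) auto
  qed (auto simp: finite_tuples integrable_rr_pmf abs_centred_term_le assms card_overlapping_tuples_le)
  also have "\<dots> \<le> ?B\<^sup>2 * real (card (graphlet_pairs k Eg) ^ 2 * n ^ (k - 2)) * n ^ k"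
    using card_tuples_le[of k n] by (intro mult_left_mono) (auto simp flip: of_nat_power)
  also have "\<dots> = (?B * ?p * real n ^ (k - 1))\<^sup>2"
  proof -
    have "k - 2 + k = (k - 1) + (k - 1)" using \<open>k \<ge> 2\<close> by simp
    then have "real n ^ (k - 2) * real n ^ k = (real n ^ (k - 1))\<^sup>2"
      by (simp add: power2_eq_square flip: power_add)
    then show ?thesis
      by (simp add: power_mult_distrib mult_ac)
  qed
  finally show ?thesis .
qed

lemma alg1_mean_square_error_le:
  assumes "simple_graph k Eg" "simple_graph n E" "k \<ge> 2" "\<epsilon> > 0"
  shows "measure_pmf.expectation (rr_pmf \<epsilon> n E) (\<lambda>b. (alg1 \<epsilon> k Eg n b - graphlet_count k Eg n E)\<^sup>2)
    \<le> ((((exp \<epsilon> + 1) / (exp \<epsilon> - 1)) ^ card (graphlet_pairs k Eg) + 1)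
        * card (graphlet_pairs k Eg) * real n ^ (k - 1))\<^sup>2"
proof -
  let ?S = "measure_pmf.expectation (rr_pmf \<epsilon> n E) (\<lambda>b. (\<Sum>l\<in>tuples k n. centred_term \<epsilon> k Eg E l b)\<^sup>2)"
  have "num_aut k Eg \<ge> 1" using num_aut_pos[of k Eg] by simp
  then have "measure_pmf.expectation (rr_pmf \<epsilon> n E) (\<lambda>b. (alg1 \<epsilon> k Eg n b - graphlet_count k Eg n E)\<^sup>2)
      = ?S / (real (num_aut k Eg))\<^sup>2"
    by (simp add: alg1_error_eq[OF assms(1,2)] power_divide)
  also have "\<dots> \<le> ?S / 1"
    using \<open>num_aut k Eg \<ge> 1\<close> by (intro divide_left_mono) auto
  finally show ?thesis
    using expectation_square_sum_centred_terms_le[OF assms(1,3,4), of n E] by simp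
qed

theorem theorem1:
  fixes k :: nat and Eg :: "nat set set" and \<epsilon> :: real
  assumes "k \<ge> 2" and "simple_graph k Eg" and "\<epsilon> > 0"
  shows "\<exists>C::real. \<forall>n::nat. \<forall>E::nat set set. simple_graph n E \<longrightarrow>
     sqrt (measure_pmf.expectation (rr_pmf \<epsilon> n E)
             (\<lambda>b. (alg1 \<epsilon> k Eg n b - real (graphlet_count k Eg n E))\<^sup>2))
       \<le> C * real n ^ (k - 1)"
proof -
  define p where "p = card (graphlet_pairs k Eg)"
  define C where "C = (((exp \<epsilon> + 1) / (exp \<epsilon> - 1)) ^ p + 1) * p"
  have "C \<ge> 0"
    using \<open>\<epsilon> > 0\<close> by (simp add: C_def)
  have "sqrt (measure_pmf.expectation (rr_pmf \<epsilon> n E)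
      (\<lambda>b. (alg1 \<epsilon> k Eg n b - real (graphlet_count k Eg n E))\<^sup>2)) \<le> C * real n ^ (k - 1)"
    if "simple_graph n E" for n E
  proof -
    have "sqrt (measure_pmf.expectation (rr_pmf \<epsilon> n E)
        (\<lambda>b. (alg1 \<epsilon> k Eg n b - real (graphlet_count k Eg n E))\<^sup>2)) \<le> sqrt ((C * real n ^ (k - 1))\<^sup>2)"
      using alg1_mean_square_error_le[OF assms(2) that assms(1,3)]
      unfolding C_def p_def by (rule real_sqrt_le_mono)
    also have "\<dots> = C * real n ^ (k - 1)"
      using \<open>C \<ge> 0\<close> by simp
    finally show ?thesis .
  qed
  then show ?thesis by blast
qed

end
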